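(* Let $R$ be a finite set of positive integers with $r=|R|$, let $L$ be an $R$-flag on vertex set $\{1,\dots,v(L)\}$, and let $s_1,\dots,s_{v(L)}$ be positive integers. Then, as $n\to\infty$, \[\pi_n(L(s_1,\dots,s_{v(L)}))=r-1+O(n^{-\delta}),\qquad \delta=\frac{\max\{s_i:1\le i\le v(L)\}}{\prod_{i=1}^{v(L)}s_i}.\]
   Context: A hypergraph $H=(V,E)$ has finite vertex set $V$ and edge set $E\subseteq 2^V$; $R(H)=\{|F|:F\in E\}$. $H_1\subseteq H_2$ means there is an injective $f\colon V(H_1)\to V(H_2)$ with $f(F)\in E(H_2)$ for all $F\in E(H_1)$. For $G$ on $n$ vertices, $h_n(G)=\sum_{F\in E(G)}1/\binom{n}{|F|}$; $\pi_n(H)=\max\{h_n(G): G\text{ on } n \text{ vertices}, R(G)\subseteq R(H), H\not\subseteq G\}$. An $R$-flag is a hypergraph with exactly one edge of each size in $R$ (and no other edges). For $H$ on vertex set $\{1,\dots,m\}$, the blowup $H(s_1,\dots,s_m)$ has vertex set $V_1\sqcup\dots\sqcup V_m$, $|V_i|=s_i$, and edge set $\bigcup_{F\in E(H)}\prod_{i\in F}V_i$. *)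

theory Defs
  imports Complex_Main "HOL-Library.Landau_Symbols"
begin

type_synonym 'a hypergraph = "'a set \<times> 'a set set"

definition hypergraph :: "'a hypergraph \<Rightarrow> bool" where
  "hypergraph H \<longleftrightarrow> finite (fst H) \<and> snd H \<subseteq> Pow (fst H)"

definition edge_sizes :: "'a hypergraph \<Rightarrow> nat set" where
  "edge_sizes H = card ` snd H"

definition subhypergraph :: "'a hypergraph \<Rightarrow> 'b hypergraph \<Rightarrow> bool" where
  "subhypergraph H1 H2 \<longleftrightarrow>
     (\<exists>f. inj_on f (fst H1) \<and> f ` fst H1 \<subseteq> fst H2 \<and> (\<forall>F\<in>snd H1. f ` F \<in> snd H2))"

definition hdens :: "nat \<Rightarrow> 'a hypergraph \<Rightarrow> real" where
  "hdens n G = (\<Sum>F\<in>snd G. 1 / real (n choose card F))"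

text \<open>pi_n(H): maximum of h_n(G) over H-free hypergraphs G on n vertices (wlog on {0..<n})
  with R(G) \<subseteq> R(H).\<close>
definition pi_n :: "nat \<Rightarrow> 'a hypergraph \<Rightarrow> real" where
  "pi_n n H = Max {hdens n G | G :: nat hypergraph.
      fst G = {0..<n} \<and> hypergraph G \<and> edge_sizes G \<subseteq> edge_sizes H \<and> \<not> subhypergraph H G}"

definition is_flag :: "nat set \<Rightarrow> nat hypergraph \<Rightarrow> nat \<Rightarrow> bool" where
  "is_flag R L m \<longleftrightarrow> hypergraph L \<and> fst L = {1..m} \<and>
     (\<forall>k\<in>R. \<exists>!F. F \<in> snd L \<and> card F = k) \<and> (\<forall>F\<in>snd L. card F \<in> R)"

text \<open>Blowup H(s_1,...): part V_i = {i} \<times> {0..<s i}; edges are the transversals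
  of the parts indexed by an edge F of H (the product of the V_i, i \<in> F).\<close>
definition blow_part :: "(nat \<Rightarrow> nat) \<Rightarrow> nat \<Rightarrow> (nat \<times> nat) set" where
  "blow_part s i = {i} \<times> {0..<s i}"

definition blowup :: "nat hypergraph \<Rightarrow> (nat \<Rightarrow> nat) \<Rightarrow> (nat \<times> nat) hypergraph" where
  "blowup H s = ((\<Union>i\<in>fst H. blow_part s i),
     (\<Union>F\<in>snd H. {X. X \<subseteq> (\<Union>i\<in>F. blow_part s i) \<and> (\<forall>i\<in>F. card (X \<inter> blow_part s i) = 1)}))"

end

theory Submission
  imports Defs "HOL-Analysis.Convex"
begin

text \<open>Lower bound: the hypergraph of all sets whose size lies in \<open>R\<close> but is not \<open>Max R\<close> has
  density exactly \<open>r - 1\<close> and cannot contain the blowup, which has an edge of size \<open>Max R\<close>.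

  Upper bound: list the vertices of \<open>L\<close> in order of increasing part size and consider the
  injective \<open>m\<close>-tuples of vertices of \<open>G\<close> that span a copy of \<open>L\<close>. A union bound over the \<open>r\<close>
  edges of \<open>L\<close> shows that at least a fraction \<open>h_n(G) - (r - 1)\<close> of all \<open>m\<close>-tuples are copies.
  If \<open>G\<close> does not contain the blowup, the set of copies contains no box
  \<open>A_1 \<times> \<dots> \<times> A_m\<close> with \<open>|A_j| = s_j\<close>, so by the Kovari-Sos-Turan argument for
  \<open>m\<close>-partite \<open>m\<close>-uniform hypergraphs it has size \<open>O(n^(m - 1/Q))\<close>, where \<open>Q\<close> is the product
  of all part sizes but the largest. Hence \<open>h_n(G) \<le> r - 1 + O(n^(-1/Q))\<close>.\<close>

section \<open>A Kovari-Sos-Turan bound for sets of lists without boxes\<close>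

definition list_box :: "'a set list \<Rightarrow> 'a list set" where
  "list_box As = {xs. length xs = length As \<and> (\<forall>i<length As. xs ! i \<in> As ! i)}"

definition has_box :: "'a set \<Rightarrow> nat list \<Rightarrow> 'a list set \<Rightarrow> bool" where
  "has_box V ss T \<longleftrightarrow> (\<exists>As. length As = length ss \<and>
     (\<forall>i<length ss. As ! i \<subseteq> V \<and> card (As ! i) = ss ! i) \<and> list_box As \<subseteq> T)"

lemma list_box_Cons: "list_box (A # As) = {v # ys | v ys. v \<in> A \<and> ys \<in> list_box As}"
  unfolding list_box_def
  by (auto simp: nth_Cons split: nat.splits)
     (metis length_Suc_conv nth_Cons_0 nth_Cons_Suc)

lemma list_box_sides_disjoint:
  assumes "list_box As \<subseteq> {xs. distinct xs}" "\<forall>A\<in>set As. A \<noteq> {}"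
    and "i < length As" "j < length As" "i \<noteq> j"
  shows "As ! i \<inter> As ! j = {}"
proof (rule ccontr)
  assume "As ! i \<inter> As ! j \<noteq> {}"
  then obtain a where a: "a \<in> As ! i" "a \<in> As ! j" by auto
  define xs where "xs = map (\<lambda>l. if l = i \<or> l = j then a else (SOME z. z \<in> As ! l)) [0..<length As]"
  have "xs \<in> list_box As"
    using a assms(2) unfolding list_box_def xs_def by (auto simp: some_in_eq)
  then have "distinct xs" using assms(1) by auto
  moreover have "xs ! i = a" "xs ! j = a" "length xs = length As"
    using assms(3,4) by (simp_all add: xs_def)
  ultimately show False using assms(3-5) unfolding distinct_conv_nth by metis
qed

lemma power_sum_le_card_power_sum:
  fixes a :: "'b \<Rightarrow> real"
  assumes "finite Y" "Y \<noteq> {}" "\<And>y. y \<in> Y \<Longrightarrow> a y \<ge> 0"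
  shows "(\<Sum>y\<in>Y. a y) ^ t \<le> real (card Y) ^ (t - 1) * (\<Sum>y\<in>Y. a y ^ t)"
proof (cases "t = 0")
  case True
  then show ?thesis using assms by (simp add: Suc_leI card_gt_0_iff)
next
  case False
  have convex: "convex_on {0::real..} (\<lambda>x. x ^ t)"
  proof (cases "even t")
    case True
    then show ?thesis using convex_power_even convex_on_subset by blast
  next
    case False
    then show ?thesis using convex_power_odd by blast
  qed
  have N: "real (card Y) > 0" using assms by (simp add: card_gt_0_iff)
  have "(\<Sum>y\<in>Y. (1 / real (card Y)) *\<^sub>R a y) ^ t \<le> (\<Sum>y\<in>Y. (1 / real (card Y)) * a y ^ t)"
    by (rule convex_on_sum[OF assms(1,2) convex]) (use N assms(3) in auto)
  then have "(\<Sum>y\<in>Y. a y) ^ t / real (card Y) ^ t \<le> (\<Sum>y\<in>Y. a y ^ t) / real (card Y)"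
    by (simp add: sum_divide_distrib[symmetric] power_divide)
  moreover have "real (card Y) ^ t = real (card Y) ^ (t - 1) * real (card Y)"
    using False by (simp flip: power_Suc2)
  ultimately show ?thesis using N by (simp add: field_simps)
qed

lemma power_div_minus_one_le_binomial:
  assumes "t > 0"
  shows "(real d / real t) ^ t - 1 \<le> real (d choose t)"
proof (cases "t \<le> d")
  case True
  then show ?thesis using binomial_ge_n_over_k_pow_k[OF True, where 'a=real] by linarith
next
  case False
  then have "(real d / real t) ^ t \<le> 1" using assms by (simp add: power_le_one)
  then show ?thesis by simp
qed

lemma power_sum_le_card_power_mult:
  fixes f :: "'b \<Rightarrow> real"
  assumes "finite A" "Q \<ge> 1" "\<And>a. a \<in> A \<Longrightarrow> f a \<ge> 0" "\<And>a. a \<in> A \<Longrightarrow> f a ^ Q \<le> M"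
  shows "(\<Sum>a\<in>A. f a) ^ Q \<le> real (card A) ^ Q * M"
proof (cases "A = {}")
  case True
  then show ?thesis using assms(2) by (simp add: power_0_left)
next
  case False
  have "(\<Sum>a\<in>A. f a) ^ Q \<le> real (card A) ^ (Q - 1) * (\<Sum>a\<in>A. f a ^ Q)"
    by (rule power_sum_le_card_power_sum[OF assms(1) False assms(3)])
  also have "\<dots> \<le> real (card A) ^ (Q - 1) * (real (card A) * M)"
    using sum_bounded_above[of A "\<lambda>a. f a ^ Q" M] assms(4) by (intro mult_left_mono) auto
  also have "\<dots> = real (card A) ^ Q * M"
    using assms(2) by (simp add: power_Suc2[symmetric] del: power_Suc2)
  finally show ?thesis .
qed

lemma kovari_sos_turan_recurrence:
  fixes D S C' :: real and n k t Q :: nat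
  assumes "n \<ge> 1" "t \<ge> 1" "k \<ge> 1" "Q \<ge> 1" "S \<ge> 0" "D \<ge> 0"
    and lower: "(D / real t) ^ t \<le> real n ^ (k * (t - 1)) * (S + real n ^ k)"
    and upper: "S ^ Q \<le> C' * real n ^ (t * Q + k * Q - 1)"
  shows "D ^ (t * Q) \<le> 2 ^ Q * real t ^ (t * Q) * (C' + 1) * real n ^ (Suc k * (t * Q) - 1)"
proof -
  define N where "N = real n ^ k"
  have N: "N \<ge> 1" using assms(1) by (simp add: N_def)
  have max_power: "max S N ^ Q \<le> S ^ Q + N ^ Q"
    using assms(5) N by (cases "S \<le> N") (auto simp: max_def)
  have bound: "N ^ ((t - 1) * Q) * (S ^ Q + N ^ Q) \<le> (C' + 1) * real n ^ (Suc k * (t * Q) - 1)"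
  proof -
    have tQ: "t * Q \<ge> 1" "k * Q \<ge> 1" using assms(2-4) by simp_all
    have "k * ((t - 1) * Q) + k * Q = k * (t * Q)"
      using assms(2) by (cases t) (simp_all add: algebra_simps)
    then have e1: "k * ((t - 1) * Q) + (t * Q + k * Q - 1) = Suc k * (t * Q) - 1"
      and e2: "k * ((t - 1) * Q) + k * Q \<le> Suc k * (t * Q) - 1"
      using tQ mult_Suc[of k "t * Q"] by linarith+
    have "N ^ ((t - 1) * Q) * S ^ Q \<le> N ^ ((t - 1) * Q) * (C' * real n ^ (t * Q + k * Q - 1))"
      using upper N by (intro mult_left_mono) simp_all
    also have "\<dots> = C' * real n ^ (Suc k * (t * Q) - 1)"
      unfolding N_def e1[symmetric] by (simp add: power_mult[symmetric] power_add)
    finally have 1: "N ^ ((t - 1) * Q) * S ^ Q \<le> C' * real n ^ (Suc k * (t * Q) - 1)" .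
    have "N ^ ((t - 1) * Q) * N ^ Q = real n ^ (k * ((t - 1) * Q) + k * Q)"
      unfolding N_def by (simp add: power_mult[symmetric] power_add)
    also have "\<dots> \<le> real n ^ (Suc k * (t * Q) - 1)"
      using e2 assms(1) by (intro power_increasing) simp_all
    finally show ?thesis using 1 by (simp add: algebra_simps)
  qed
  have "(D / real t) ^ t \<le> N ^ (t - 1) * (S + N)"
    using lower by (simp add: N_def power_mult)
  also have "\<dots> \<le> N ^ (t - 1) * (2 * max S N)"
    using N by (intro mult_left_mono) auto
  finally have "(D / real t) ^ t \<le> 2 * (N ^ (t - 1) * max S N)" by simp
  then have "((D / real t) ^ t) ^ Q \<le> (2 * (N ^ (t - 1) * max S N)) ^ Q"
    by (rule power_mono) (use assms in simp)
  then have "(D / real t) ^ (t * Q) \<le> 2 ^ Q * (N ^ ((t - 1) * Q) * max S N ^ Q)"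
    by (simp add: power_mult power_mult_distrib)
  also have "\<dots> \<le> 2 ^ Q * (N ^ ((t - 1) * Q) * (S ^ Q + N ^ Q))"
    using max_power N by (intro mult_left_mono) simp_all
  also have "\<dots> \<le> 2 ^ Q * ((C' + 1) * real n ^ (Suc k * (t * Q) - 1))"
    using bound by simp
  finally have "(D / real t) ^ (t * Q) \<le> 2 ^ Q * ((C' + 1) * real n ^ (Suc k * (t * Q) - 1))" .
  moreover have "D ^ (t * Q) = real t ^ (t * Q) * (D / real t) ^ (t * Q)"
    using assms(2) by (simp add: power_divide)
  ultimately show ?thesis
    using assms(2) by (simp add: mult_left_mono mult.assoc mult.left_commute)
qed

lemma card_lt_if_no_box_length_one:
  assumes "T \<subseteq> {xs. length xs = 1 \<and> set xs \<subseteq> V}" "\<not> has_box V [t] T"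
  shows "card T < t"
proof (rule ccontr)
  have hd_T: "xs \<in> T \<Longrightarrow> xs = [hd xs] \<and> hd xs \<in> V" for xs
    using assms(1) by (auto simp: length_Suc_conv)
  then have "inj_on hd T" by (metis inj_onI)
  then have "card (hd ` T) = card T" by (rule card_image)
  moreover assume "\<not> card T < t"
  ultimately obtain B where B: "B \<subseteq> hd ` T" "card B = t"
    by (metis obtain_subset_with_card_n not_less)
  have "list_box [B] \<subseteq> T"
    using B(1) hd_T unfolding list_box_def by (auto simp: length_Suc_conv)
  then have "has_box V [t] T"
    unfolding has_box_def using B hd_T by (intro exI[of _ "[B]"]) auto
  with assms(2) show False by simp
qed

lemma card_eq_sum_card_heads:
  assumes "finite V" "T \<subseteq> {xs. length xs = Suc k \<and> set xs \<subseteq> V}"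
  shows "card T = (\<Sum>y\<in>{ys. set ys \<subseteq> V \<and> length ys = k}. card {v. v # y \<in> T})"
proof -
  let ?Y = "{ys. set ys \<subseteq> V \<and> length ys = k}"
  define P where "P = (SIGMA y:?Y. {v. v # y \<in> T})"
  have heads: "{v. v # y \<in> T} \<subseteq> V" for y using assms(2) by auto
  have T_eq: "T = (\<lambda>(y, v). v # y) ` P"
  proof
    show "T \<subseteq> (\<lambda>(y, v). v # y) ` P"
    proof
      fix xs assume "xs \<in> T"
      moreover from this obtain v y where "xs = v # y" "length y = k" "set y \<subseteq> V"
        using assms(2) by (auto simp: length_Suc_conv)
      ultimately show "xs \<in> (\<lambda>(y, v). v # y) ` P"
        unfolding P_def by (auto intro!: image_eqI[of _ _ "(y, v)"])
    qed
  qed (auto simp: P_def)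
  have "inj_on (\<lambda>(y, v). v # y) P" by (auto simp: inj_on_def)
  then have "card T = card P" by (simp add: T_eq card_image)
  also have "\<dots> = (\<Sum>y\<in>?Y. card {v. v # y \<in> T})"
    unfolding P_def using finite_subset[OF heads assms(1)]
    by (intro card_SigmaI finite_lists_length_eq assms(1)) auto
  finally show ?thesis .
qed

lemma sum_card_common_tails:
  assumes "finite V" "t > 0" "T \<subseteq> {xs. length xs = Suc k \<and> set xs \<subseteq> V}"
  shows "(\<Sum>B\<in>{B. B \<subseteq> V \<and> card B = t}. card {y. \<forall>v\<in>B. v # y \<in> T})
       = (\<Sum>y\<in>{ys. set ys \<subseteq> V \<and> length ys = k}. card {v. v # y \<in> T} choose t)"
proof -
  let ?Y = "{ys. set ys \<subseteq> V \<and> length ys = k}" and ?Bs = "{B. B \<subseteq> V \<and> card B = t}"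
  have fY: "finite ?Y" using assms(1) by (rule finite_lists_length_eq)
  have fBs: "finite ?Bs" using assms(1) by simp
  have tails: "{y. \<forall>v\<in>B. v # y \<in> T} = {y\<in>?Y. B \<subseteq> {v. v # y \<in> T}}" if "B \<in> ?Bs" for B
  proof -
    from that assms(2) obtain v where "v \<in> B" by fastforce
    then have "\<forall>v\<in>B. v # y \<in> T \<Longrightarrow> y \<in> ?Y" for y using assms(3) by fastforce
    then show ?thesis by auto
  qed
  have heads: "{B. B \<subseteq> V \<and> card B = t \<and> B \<subseteq> {v. v # y \<in> T}} = {B. B \<subseteq> {v. v # y \<in> T} \<and> card B = t}" for y
    using assms(3) by auto
  have "(\<Sum>B\<in>?Bs. card {y. \<forall>v\<in>B. v # y \<in> T}) = (\<Sum>B\<in>?Bs. \<Sum>y\<in>?Y. of_bool (B \<subseteq> {v. v # y \<in> T}))"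
    using fY by (intro sum.cong refl) (simp add: tails Int_def)
  also have "\<dots> = (\<Sum>y\<in>?Y. \<Sum>B\<in>?Bs. of_bool (B \<subseteq> {v. v # y \<in> T}))"
    by (rule sum.swap)
  also have "\<dots> = (\<Sum>y\<in>?Y. card {v. v # y \<in> T} choose t)"
  proof (intro sum.cong refl)
    fix y
    have "{v. v # y \<in> T} \<subseteq> V" using assms(3) by auto
    then have "finite {v. v # y \<in> T}" using assms(1) by (rule finite_subset)
    then show "(\<Sum>B\<in>?Bs. of_bool (B \<subseteq> {v. v # y \<in> T})) = card {v. v # y \<in> T} choose t"
      using fBs by (simp add: Int_def heads n_subsets)
  qed
  finally show ?thesis .
qed

lemma no_box_common_tails:
  assumes "\<not> has_box V (t # ss) T" "B \<subseteq> V" "card B = t"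
  shows "\<not> has_box V ss {y. \<forall>v\<in>B. v # y \<in> T}"
proof
  assume "has_box V ss {y. \<forall>v\<in>B. v # y \<in> T}"
  then obtain As where "length As = length ss" "\<forall>i<length ss. As ! i \<subseteq> V \<and> card (As ! i) = ss ! i"
    "list_box As \<subseteq> {y. \<forall>v\<in>B. v # y \<in> T}"
    unfolding has_box_def by blast
  then have "has_box V (t # ss) T"
    unfolding has_box_def using assms(2,3)
    by (intro exI[of _ "B # As"]) (auto simp: nth_Cons list_box_Cons split: nat.splits)
  with assms(1) show False by simp
qed

lemma card_div_power_le_sum_card_common_tails:
  assumes "finite V" "V \<noteq> {}" "t > 0" "T \<subseteq> {xs. length xs = Suc k \<and> set xs \<subseteq> V}"
  shows "(real (card T) / real t) ^ t
    \<le> real (card V) ^ (k * (t - 1)) *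
       (real (\<Sum>B\<in>{B. B \<subseteq> V \<and> card B = t}. card {y. \<forall>v\<in>B. v # y \<in> T}) + real (card V) ^ k)"
proof -
  let ?Y = "{ys. set ys \<subseteq> V \<and> length ys = k}" and ?h = "\<lambda>y. card {v. v # y \<in> T}"
  have cY: "card ?Y = card V ^ k" by (rule card_lists_length_eq[OF assms(1)])
  obtain v where "v \<in> V" using assms(2) by blast
  then have Y: "finite ?Y" "?Y \<noteq> {}"
    using finite_lists_length_eq[OF assms(1)] by (auto intro!: exI[of _ "replicate k v"])
  have "(real (card T) / real t) ^ t = (\<Sum>y\<in>?Y. real (?h y) / real t) ^ t"
    using card_eq_sum_card_heads[OF assms(1,4)] by (simp add: sum_divide_distrib)
  also have "\<dots> \<le> real (card ?Y) ^ (t - 1) * (\<Sum>y\<in>?Y. (real (?h y) / real t) ^ t)"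
    by (rule power_sum_le_card_power_sum[OF Y]) simp
  also have "(\<Sum>y\<in>?Y. (real (?h y) / real t) ^ t) \<le> (\<Sum>y\<in>?Y. real (?h y choose t) + 1)"
    using power_div_minus_one_le_binomial assms(3) by (intro sum_mono) (simp add: algebra_simps)
  also have "\<dots> = real (\<Sum>B\<in>{B. B \<subseteq> V \<and> card B = t}. card {y. \<forall>v\<in>B. v # y \<in> T}) + real (card V) ^ k"
    using cY unfolding sum_card_common_tails[OF assms(1,3,4)] by (simp add: sum.distrib)
  finally show ?thesis using cY by (simp add: power_mult mult_left_mono)
qed

lemma sum_card_common_tails_power_le:
  fixes V :: "'a set" and C' :: real
  assumes "finite V" "t > 0" "k \<ge> 1" "Q \<ge> 1" "C' \<ge> 0"
    and IH: "\<And>T'. T' \<subseteq> {xs. length xs = k \<and> set xs \<subseteq> V} \<Longrightarrow> \<not> has_box V ss T' \<Longrightarrow>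
               real (card T') ^ Q \<le> C' * real (card V) ^ (k * Q - 1)"
    and T: "T \<subseteq> {xs. length xs = Suc k \<and> set xs \<subseteq> V}" and no_box: "\<not> has_box V (t # ss) T"
  shows "real (\<Sum>B\<in>{B. B \<subseteq> V \<and> card B = t}. card {y. \<forall>v\<in>B. v # y \<in> T}) ^ Q
    \<le> C' * real (card V) ^ (t * Q + k * Q - 1)"
proof -
  let ?Bs = "{B. B \<subseteq> V \<and> card B = t}" and ?tails = "\<lambda>B. {y. \<forall>v\<in>B. v # y \<in> T}"
  have "real (\<Sum>B\<in>?Bs. card (?tails B)) ^ Q \<le> real (card ?Bs) ^ Q * (C' * real (card V) ^ (k * Q - 1))"
    unfolding of_nat_sum
  proof (rule power_sum_le_card_power_mult)
    fix B assume "B \<in> ?Bs"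
    moreover have "?tails B \<subseteq> {xs. length xs = k \<and> set xs \<subseteq> V}" if "B \<noteq> {}"
      using that T by fastforce
    ultimately show "real (card (?tails B)) ^ Q \<le> C' * real (card V) ^ (k * Q - 1)"
      using IH no_box_common_tails[OF no_box] assms(2) by fastforce
  qed (use assms(1,4) in simp_all)
  also have "\<dots> \<le> real (card V) ^ (t * Q) * (C' * real (card V) ^ (k * Q - 1))"
  proof -
    have "card ?Bs \<le> card V ^ t"
      using n_subsets[OF assms(1), of t] binomial_le_pow[of t "card V"] binomial_eq_0[of "card V" t]
      by (cases "t \<le> card V") auto
    then have "real (card ?Bs) ^ Q \<le> real (card V) ^ (t * Q)"
      by (simp add: power_mult power_mono flip: of_nat_power)
    then show ?thesis using assms(5) by (intro mult_right_mono) simp_all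
  qed
  also have "\<dots> = C' * real (card V) ^ (t * Q + k * Q - 1)"
    using assms(3,4) by (simp add: power_add[symmetric] Nat.add_diff_assoc)
  finally show ?thesis .
qed

text \<open>Double counting of the pairs \<open>(B, y)\<close> of a \<open>t\<close>-set \<open>B\<close> of first entries and a tail \<open>y\<close> with
  \<open>v # y \<in> T\<close> for all \<open>v \<in> B\<close>: convexity bounds their number from below, and the induction
  hypothesis, applied to the common tails of each \<open>B\<close>, from above.\<close>
lemma kovari_sos_turan_step:
  fixes V :: "'a set" and C' :: real
  assumes "finite V" "t \<ge> 1" "k \<ge> 1" "Q \<ge> 1" "C' \<ge> 0"
    and IH: "\<And>T'. T' \<subseteq> {xs. length xs = k \<and> set xs \<subseteq> V} \<Longrightarrow> \<not> has_box V ss T' \<Longrightarrow>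
               real (card T') ^ Q \<le> C' * real (card V) ^ (k * Q - 1)"
    and T: "T \<subseteq> {xs. length xs = Suc k \<and> set xs \<subseteq> V}" and no_box: "\<not> has_box V (t # ss) T"
  shows "real (card T) ^ (t * Q)
           \<le> 2 ^ Q * real t ^ (t * Q) * (C' + 1) * real (card V) ^ (Suc k * (t * Q) - 1)"
proof (cases "V = {}")
  case True
  then have "T = {}" using T by auto
  moreover have tQ: "t * Q \<ge> 1" using assms(2,4) by simp
  moreover have "Suc k * (t * Q) - 1 \<noteq> 0"
    using tQ mult_le_mono[OF assms(3) tQ] mult_Suc[of k "t * Q"] by linarith
  ultimately show ?thesis using True by (simp add: power_0_left)
next
  case False
  have t: "t > 0" using assms(2) by simp
  have "card V \<ge> 1" using False assms(1) by (simp add: Suc_le_eq card_gt_0_iff)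
  from kovari_sos_turan_recurrence[OF this assms(2-4) _ _
      card_div_power_le_sum_card_common_tails[OF assms(1) False t T]
      sum_card_common_tails_power_le[OF assms(1) t assms(3-5) IH T no_box]]
  show ?thesis by (simp add: sum_nonneg)
qed

theorem kovari_sos_turan:
  assumes "ss \<noteq> []" "\<forall>x\<in>set ss. x > 0"
  shows "\<exists>C\<ge>0. \<forall>(V::'a set) T. finite V \<longrightarrow> T \<subseteq> {xs. length xs = length ss \<and> set xs \<subseteq> V} \<longrightarrow>
           \<not> has_box V ss T \<longrightarrow>
           real (card T) ^ prod_list (butlast ss) \<le> C * real (card V) ^ (length ss * prod_list (butlast ss) - 1)"
  using assms
proof (induction ss)
  case Nil
  then show ?case by simp
next
  case (Cons t ss)
  show ?case
  proof (cases "ss = []")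
    case True
    have "card T \<le> t" if "T \<subseteq> {xs. length xs = 1 \<and> set xs \<subseteq> V}" "\<not> has_box V [t] T"
      for V :: "'a set" and T
      using card_lt_if_no_box_length_one[OF that] by simp
    then show ?thesis using True by (intro exI[of _ "real t"]) auto
  next
    case False
    define Q where "Q = prod_list (butlast ss)"
    have "0 \<notin> set (butlast ss)" using Cons.prems by (auto dest: in_set_butlastD)
    then have Q: "Q \<ge> 1" unfolding Q_def using prod_list_zero_iff[of "butlast ss"] by linarith
    obtain C' where C': "C' \<ge> 0" and IH: "\<forall>(V::'a set) T. finite V \<longrightarrow>
        T \<subseteq> {xs. length xs = length ss \<and> set xs \<subseteq> V} \<longrightarrow> \<not> has_box V ss T \<longrightarrow>
        real (card T) ^ Q \<le> C' * real (card V) ^ (length ss * Q - 1)"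
      using Cons False unfolding Q_def by auto
    show ?thesis
    proof (intro exI[of _ "2 ^ Q * real t ^ (t * Q) * (C' + 1)"] conjI allI impI)
      fix V :: "'a set" and T
      assume "finite V" "T \<subseteq> {xs. length xs = length (t # ss) \<and> set xs \<subseteq> V}"
        and "\<not> has_box V (t # ss) T"
      with kovari_sos_turan_step[of V t "length ss" Q C' ss T] IH Cons.prems False C' Q
      show "real (card T) ^ prod_list (butlast (t # ss)) \<le> 2 ^ Q * real t ^ (t * Q) * (C' + 1) *
          real (card V) ^ (length (t # ss) * prod_list (butlast (t # ss)) - 1)"
        by (simp add: Suc_le_eq Q_def)
    qed (use C' in simp)
  qed
qed

lemma Max_div_prod_list_sorted:
  fixes xs :: "nat list"
  assumes "sorted xs" "xs \<noteq> []" "\<forall>x\<in>set xs. x > 0"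
  shows "real (Max (set xs)) / real (prod_list xs) = 1 / real (prod_list (butlast xs))"
proof -
  have xs: "butlast xs @ [last xs] = xs" using assms(2) by simp
  have "sorted (butlast xs @ [last xs])" unfolding xs by (rule assms(1))
  then have "\<forall>y\<in>set (butlast xs @ [last xs]). y \<le> last xs" by (auto simp: sorted_append)
  then have "Max (set xs) = last xs"
    unfolding xs using assms(2) by (intro Max_eqI) auto
  moreover have "prod_list (butlast xs @ [last xs]) = prod_list (butlast xs) * last xs" by simp
  then have "prod_list xs = prod_list (butlast xs) * last xs" unfolding xs .
  moreover have "last xs > 0" using assms(2,3) by simp
  ultimately show ?thesis by simp
qed

section \<open>Counting injective lists\<close>

definition distinct_lists :: "nat \<Rightarrow> 'a set \<Rightarrow> 'a list set" where
  "distinct_lists m V = {xs. length xs = m \<and> distinct xs \<and> set xs \<subseteq> V}"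

lemma finite_distinct_lists: "finite V \<Longrightarrow> finite (distinct_lists m V)"
  unfolding distinct_lists_def
  by (rule finite_subset[OF _ finite_lists_length_eq[of V m]]) auto

lemma nth_image_distinct_lists:
  assumes "xs \<in> distinct_lists m V" "P \<subseteq> {..<m}"
  shows "card ((!) xs ` P) = card P" "(!) xs ` P \<subseteq> V"
proof -
  have "inj_on ((!) xs) P" using assms unfolding distinct_lists_def by (intro inj_on_nth) auto
  then show "card ((!) xs ` P) = card P" by (simp add: card_image)
  show "(!) xs ` P \<subseteq> V" using assms unfolding distinct_lists_def by (auto intro: nth_mem)
qed

lemma ex_bij_betw_self_with_image:
  assumes "finite V" "Y \<subseteq> V" "Y' \<subseteq> V" "card Y = card Y'"
  shows "\<exists>\<sigma>. bij_betw \<sigma> V V \<and> \<sigma> ` Y = Y'"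
proof -
  have fin: "finite Y" "finite Y'" using assms finite_subset by auto
  obtain h1 where h1: "bij_betw h1 Y Y'" using finite_same_card_bij[OF fin assms(4)] by blast
  have "card (V - Y) = card (V - Y')" using assms fin by (simp add: card_Diff_subset)
  then obtain h2 where h2: "bij_betw h2 (V - Y) (V - Y')"
    using finite_same_card_bij assms(1) by blast
  define \<sigma> where "\<sigma> v = (if v \<in> Y then h1 v else h2 v)" for v
  have "bij_betw \<sigma> Y Y'" using h1 by (rule bij_betw_cong[THEN iffD1, rotated]) (simp add: \<sigma>_def)
  moreover have "bij_betw \<sigma> (V - Y) (V - Y')"
    using h2 by (rule bij_betw_cong[THEN iffD1, rotated]) (simp add: \<sigma>_def)
  ultimately have "bij_betw \<sigma> (Y \<union> (V - Y)) (Y' \<union> (V - Y'))" by (rule bij_betw_combine) blast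
  moreover have "Y \<union> (V - Y) = V" "Y' \<union> (V - Y') = V" using assms by auto
  ultimately show ?thesis using \<open>bij_betw \<sigma> Y Y'\<close> by (auto simp: bij_betw_def)
qed

lemma card_distinct_lists_image_eq:
  assumes "finite V" "P \<subseteq> {..<m}" "Y \<subseteq> V" "Y' \<subseteq> V" "card Y = card Y'"
  shows "card {xs \<in> distinct_lists m V. (!) xs ` P = Y} = card {xs \<in> distinct_lists m V. (!) xs ` P = Y'}"
proof -
  have le: "card {xs \<in> distinct_lists m V. (!) xs ` P = A} \<le> card {xs \<in> distinct_lists m V. (!) xs ` P = A'}"
    if A: "A \<subseteq> V" "A' \<subseteq> V" "card A = card A'" for A A'
  proof -
    obtain \<sigma> where \<sigma>: "bij_betw \<sigma> V V" "\<sigma> ` A = A'"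
      using ex_bij_betw_self_with_image[OF assms(1) A] by blast
    then have inj: "inj_on \<sigma> V" and onto: "\<sigma> ` V = V" by (auto simp: bij_betw_def)
    show ?thesis
    proof (rule card_inj_on_le[of "map \<sigma>"])
      show "inj_on (map \<sigma>) {xs \<in> distinct_lists m V. (!) xs ` P = A}"
        using map_inj_on[of \<sigma>] inj_on_subset[OF inj]
        by (intro inj_onI) (auto simp: distinct_lists_def)
      show "map \<sigma> ` {xs \<in> distinct_lists m V. (!) xs ` P = A} \<subseteq> {xs \<in> distinct_lists m V. (!) xs ` P = A'}"
      proof
        fix zs assume "zs \<in> map \<sigma> ` {xs \<in> distinct_lists m V. (!) xs ` P = A}"
        then obtain xs where xs: "xs \<in> distinct_lists m V" "(!) xs ` P = A" and zs: "zs = map \<sigma> xs"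
          by blast
        have "(!) (map \<sigma> xs) ` P = \<sigma> ` A"
          unfolding xs(2)[symmetric] image_image
          using xs(1) assms(2) unfolding distinct_lists_def by (intro image_cong) auto
        moreover have "map \<sigma> xs \<in> distinct_lists m V"
          using xs inj onto unfolding distinct_lists_def by (auto simp: distinct_map inj_on_subset)
        ultimately show "zs \<in> {xs \<in> distinct_lists m V. (!) xs ` P = A'}" using \<sigma>(2) zs by simp
      qed
    qed (simp add: finite_distinct_lists[OF assms(1)])
  qed
  show ?thesis using le[of Y Y'] le[of Y' Y] assms(3-5) by simp
qed

lemma card_distinct_lists_image_in:
  assumes "finite V" "m \<le> card V" "P \<subseteq> {..<m}" "\<G> \<subseteq> {Y. Y \<subseteq> V \<and> card Y = card P}"
  shows "real (card {xs \<in> distinct_lists m V. (!) xs ` P \<in> \<G>}) * real (card V choose card P)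
       = real (card (distinct_lists m V)) * real (card \<G>)"
proof -
  define Ks where "Ks = {Y. Y \<subseteq> V \<and> card Y = card P}"
  define c where "c Y = card {xs \<in> distinct_lists m V. (!) xs ` P = Y}" for Y
  have "card P \<le> card V" using assms(2,3) by (metis card_lessThan card_mono finite_lessThan le_trans)
  then obtain Y0 where Y0: "Y0 \<in> Ks" using obtain_subset_with_card_n unfolding Ks_def by blast
  have c: "c Y = c Y0" if "Y \<in> Ks" for Y
    using card_distinct_lists_image_eq[OF assms(1,3)] that Y0 unfolding Ks_def c_def by simp
  have split: "card {xs \<in> distinct_lists m V. (!) xs ` P \<in> A} = (\<Sum>Y\<in>A. c Y)" if "A \<subseteq> Ks" for A
  proof -
    have "finite A" using that assms(1) unfolding Ks_def by (auto intro: finite_subset)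
    moreover have "{xs \<in> distinct_lists m V. (!) xs ` P \<in> A} = (\<Union>Y\<in>A. {xs \<in> distinct_lists m V. (!) xs ` P = Y})"
      by auto
    ultimately show ?thesis
      unfolding c_def using finite_distinct_lists[OF assms(1)]
      by (simp only:) (rule card_UN_disjoint; auto)
  qed
  have "distinct_lists m V = {xs \<in> distinct_lists m V. (!) xs ` P \<in> Ks}"
    using nth_image_distinct_lists[OF _ assms(3)] unfolding Ks_def by blast
  then have "card (distinct_lists m V) = card Ks * c Y0" using split[of Ks] c by simp
  moreover have "card {xs \<in> distinct_lists m V. (!) xs ` P \<in> \<G>} = card \<G> * c Y0"
    using split assms(4) c unfolding Ks_def by (simp add: subset_iff)
  moreover have "card Ks = card V choose card P" unfolding Ks_def by (rule n_subsets[OF assms(1)])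
  ultimately show ?thesis by simp
qed

lemma card_le_card_Ball_plus_sum_card_not:
  assumes "finite A"
  shows "card I \<le> card {x \<in> I. \<forall>a\<in>A. P a x} + (\<Sum>a\<in>A. card {x \<in> I. \<not> P a x})"
proof -
  define good where "good = {x \<in> I. \<forall>a\<in>A. P a x}"
  define bad where "bad a = {x \<in> I. \<not> P a x}" for a
  have "I = good \<union> (\<Union>a\<in>A. bad a)" unfolding good_def bad_def by blast
  then have "card I \<le> card good + card (\<Union>a\<in>A. bad a)" by (simp add: card_Un_le)
  also have "card (\<Union>a\<in>A. bad a) \<le> (\<Sum>a\<in>A. card (bad a))" by (rule card_UN_le[OF assms])
  finally show ?thesis unfolding good_def bad_def by simp
qed
lemma card_distinct_lists_ge:
  assumes "n \<ge> 2 * m"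
  shows "real (card (distinct_lists m {0..<n})) \<ge> (real n / 2) ^ m"
proof -
  have "real (card (distinct_lists m {0..<n})) = (\<Prod>i\<in>{n - m + 1..n}. real i)"
    unfolding distinct_lists_def using card_lists_distinct_length_eq[of "{0..<n}" m] assms by simp
  also have "\<dots> \<ge> (\<Prod>i\<in>{n - m + 1..n}. real n / 2)"
    by (rule prod_mono) (use assms in auto)
  also have "(\<Prod>i\<in>{n - m + 1..n}. real n / 2) = (real n / 2) ^ m" using assms by simp
  finally show ?thesis .
qed

lemma le_powr_inverse_if_power_le:
  fixes e X :: real
  assumes "Q \<ge> 1" "e > 0" "e ^ Q \<le> X"
  shows "e \<le> X powr (1 / real Q)"
proof -
  have "e = (e ^ Q) powr (1 / real Q)"
    using assms(1,2) by (simp add: powr_realpow[symmetric] powr_powr)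
  also have "\<dots> \<le> X powr (1 / real Q)"
    using assms(2,3) by (intro powr_mono2) auto
  finally show ?thesis .
qed

lemma density_excess_bound:
  fixes e I T C :: real and n m Q :: nat
  assumes "n \<ge> 1" "m \<ge> 1" "Q \<ge> 1" "e > 0"
    and I: "I \<ge> (real n / 2) ^ m" and T: "T \<ge> I * e" and kst: "T ^ Q \<le> C * real n ^ (m * Q - 1)"
  shows "e \<le> (C * 2 ^ (m * Q)) powr (1 / real Q) * real n powr (- (1 / real Q))"
proof -
  have n: "real n > 0" using assms(1) by simp
  have "((real n / 2) ^ m * e) ^ Q \<le> (I * e) ^ Q"
    using I assms(4) by (intro power_mono mult_right_mono) auto
  also have "\<dots> \<le> T ^ Q"
  proof -
    have "0 \<le> I" using I by (meson order.trans zero_le_divide_iff of_nat_0_le_iff zero_le_numeral zero_le_power)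
    then show ?thesis using T assms(4) by (intro power_mono) simp_all
  qed
  also note kst
  finally have A: "((real n / 2) ^ m * e) ^ Q \<le> C * real n ^ (m * Q - 1)" .
  have mQ: "m * Q = Suc (m * Q - 1)" using assms(2,3) by simp
  have "((real n / 2) ^ m * e) ^ Q = e ^ Q * real n * real n ^ (m * Q - 1) / 2 ^ (m * Q)"
  proof -
    have "((real n / 2) ^ m * e) ^ Q = e ^ Q * real n ^ (m * Q) / 2 ^ (m * Q)"
      by (simp add: power_mult_distrib power_divide power_mult[symmetric] mult.commute)
    also have "real n ^ (m * Q) = real n * real n ^ (m * Q - 1)" by (subst mQ) simp
    finally show ?thesis by simp
  qed
  with A have "e ^ Q * real n * real n ^ (m * Q - 1) \<le> C * 2 ^ (m * Q) * real n ^ (m * Q - 1)"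
    by (simp add: divide_le_eq mult.commute mult.left_commute)
  then have "e ^ Q * real n \<le> C * 2 ^ (m * Q)" using n by (simp add: mult_le_cancel_right)
  then have bound: "e ^ Q \<le> C * 2 ^ (m * Q) / real n" using n by (simp add: le_divide_eq)
  have C: "0 \<le> C * 2 ^ (m * Q) / real n" using bound assms(4) by (meson order.trans zero_le_power less_imp_le)
  have "e \<le> (C * 2 ^ (m * Q) / real n) powr (1 / real Q)"
    by (rule le_powr_inverse_if_power_le[OF assms(3,4) bound])
  also have "\<dots> = (C * 2 ^ (m * Q)) powr (1 / real Q) / real n powr (1 / real Q)"
    using C n by (subst powr_divide) (auto simp: zero_le_divide_iff)
  also have "\<dots> = (C * 2 ^ (m * Q)) powr (1 / real Q) * real n powr (- (1 / real Q))"
    by (simp add: powr_minus divide_inverse)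
  finally show ?thesis .
qed

definition transversals :: "(nat \<Rightarrow> nat) \<Rightarrow> nat set \<Rightarrow> (nat \<times> nat) set set" where
  "transversals s F = {X. X \<subseteq> (\<Union>i\<in>F. blow_part s i) \<and> (\<forall>i\<in>F. card (X \<inter> blow_part s i) = 1)}"

lemma fst_blowup: "fst (blowup H s) = (\<Union>i\<in>fst H. blow_part s i)"
  unfolding blowup_def by simp

lemma snd_blowup: "snd (blowup H s) = (\<Union>F\<in>snd H. transversals s F)"
  unfolding blowup_def transversals_def by simp

lemma transversal_graph:
  assumes "X \<in> transversals s F"
  obtains \<tau> where "X = (\<lambda>i. (i, \<tau> i)) ` F" "\<forall>i\<in>F. \<tau> i < s i"
proof -
  have "\<exists>t. X \<inter> blow_part s i = {(i, t)} \<and> t < s i" if "i \<in> F" for i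
  proof -
    have "card (X \<inter> blow_part s i) = 1" using assms that unfolding transversals_def by auto
    then obtain e where e: "X \<inter> blow_part s i = {e}" by (rule card_1_singletonE)
    then have "e \<in> {i} \<times> {0..<s i}" unfolding blow_part_def by blast
    then show ?thesis using e by auto
  qed
  then obtain \<tau> where \<tau>: "\<forall>i\<in>F. X \<inter> blow_part s i = {(i, \<tau> i)} \<and> \<tau> i < s i" by metis
  have "X = (\<lambda>i. (i, \<tau> i)) ` F"
  proof
    show "X \<subseteq> (\<lambda>i. (i, \<tau> i)) ` F"
      using assms \<tau> unfolding transversals_def by blast
  qed (use \<tau> in blast)
  with \<tau> show ?thesis using that by blast
qed

lemma card_transversal:
  assumes "finite F" "X \<in> transversals s F"
  shows "card X = card F"
proof -
  obtain \<tau> where "X = (\<lambda>i. (i, \<tau> i)) ` F" using transversal_graph[OF assms(2)] by blast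
  then show ?thesis by (simp add: card_image inj_on_def)
qed

lemma zero_transversal:
  assumes "\<forall>i\<in>F. s i > 0"
  shows "(\<lambda>i. (i, 0)) ` F \<in> transversals s F"
proof -
  have "(\<lambda>i. (i, 0::nat)) ` F \<inter> blow_part s i = {(i, 0)}" if "i \<in> F" for i
    using that assms unfolding blow_part_def by auto
  then show ?thesis using assms unfolding transversals_def blow_part_def by auto
qed

section \<open>Blowups of flags\<close>

locale flag_blowup =
  fixes R :: "nat set" and L :: "nat hypergraph" and m :: nat and s :: "nat \<Rightarrow> nat"
  assumes finite_R: "finite R" and R_nonempty: "R \<noteq> {}" and R_pos: "\<forall>k\<in>R. k > 0"
    and flag: "is_flag R L m" and s_pos: "\<forall>i\<in>{1..m}. s i > 0"
begin

abbreviation "B \<equiv> blowup L s"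

lemma flag_hypergraph: "hypergraph L"
  and vertices_flag: "fst L = {1..m}"
  and unique_edge_flag: "\<forall>k\<in>R. \<exists>!F. F \<in> snd L \<and> card F = k"
  and card_edge_flag: "\<forall>F\<in>snd L. card F \<in> R"
  using flag unfolding is_flag_def by simp_all

lemma edge_flag_subset: "F \<in> snd L \<Longrightarrow> F \<subseteq> {1..m}"
  using flag_hypergraph vertices_flag unfolding hypergraph_def by auto

lemma finite_edges_flag: "finite (snd L)"
  using flag_hypergraph vertices_flag unfolding hypergraph_def by (auto intro: finite_subset)

lemma finite_edge_flag: "F \<in> snd L \<Longrightarrow> finite F"
  using edge_flag_subset finite_subset by blast

lemma card_image_edges_flag: "card ` snd L = R"
proof
  show "card ` snd L \<subseteq> R" using card_edge_flag by blast
  show "R \<subseteq> card ` snd L"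
  proof
    fix k assume "k \<in> R"
    then obtain F where "F \<in> snd L" "card F = k" using unique_edge_flag by blast
    then show "k \<in> card ` snd L" by blast
  qed
qed

lemma inj_on_card_edges_flag: "inj_on card (snd L)"
proof (rule inj_onI)
  fix F F' assume "F \<in> snd L" "F' \<in> snd L" "card F = card F'"
  moreover from this have "\<exists>!F''. F'' \<in> snd L \<and> card F'' = card F"
    using unique_edge_flag card_edge_flag by blast
  ultimately show "F = F'" by metis
qed

lemma card_edge_flag_le: "F \<in> snd L \<Longrightarrow> card F \<le> m"
  using card_mono[OF _ edge_flag_subset] by fastforce

lemma m_pos: "m \<ge> 1"
proof -
  obtain F where F: "F \<in> snd L" "card F \<in> R" using R_nonempty card_image_edges_flag by auto
  then have "F \<noteq> {}" using R_pos by auto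
  then show ?thesis using edge_flag_subset[OF F(1)] by auto
qed

lemma edge_sizes_blowup: "edge_sizes B = R"
proof -
  have "card ` snd B = card ` snd L"
  proof
    show "card ` snd B \<subseteq> card ` snd L"
    proof
      fix k assume "k \<in> card ` snd B"
      then obtain X F where F: "F \<in> snd L" "X \<in> transversals s F" "k = card X"
        unfolding snd_blowup by blast
      then have "k = card F" using card_transversal finite_edge_flag by blast
      then show "k \<in> card ` snd L" using F(1) by blast
    qed
    show "card ` snd L \<subseteq> card ` snd B"
    proof
      fix k assume "k \<in> card ` snd L"
      then obtain F where F: "F \<in> snd L" "k = card F" by auto
      have "(\<lambda>i. (i, 0)) ` F \<in> transversals s F" using zero_transversal s_pos edge_flag_subset[OF F(1)] by auto
      moreover have "card ((\<lambda>i. (i, 0::nat)) ` F) = card F" by (simp add: card_image inj_on_def)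
      ultimately show "k \<in> card ` snd B" unfolding snd_blowup using F by force
    qed
  qed
  then show ?thesis unfolding edge_sizes_def card_image_edges_flag .
qed

definition admissible :: "nat \<Rightarrow> nat hypergraph \<Rightarrow> bool" where
  "admissible n G \<longleftrightarrow> fst G = {0..<n} \<and> hypergraph G \<and> edge_sizes G \<subseteq> R \<and> \<not> subhypergraph B G"

lemma pi_n_eq_Max: "pi_n n B = Max {hdens n G | G. admissible n G}"
  unfolding pi_n_def admissible_def edge_sizes_blowup by simp

lemma finite_admissible_densities: "finite {hdens n G | G. admissible n G}"
proof -
  have "{hdens n G | G. admissible n G} \<subseteq> (\<lambda>E. hdens n ({0..<n}, E)) ` Pow (Pow {0..<n})"
  proof
    fix x assume "x \<in> {hdens n G | G. admissible n G}"
    then obtain G where G: "admissible n G" "x = hdens n G" by auto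
    then have "G = ({0..<n}, snd G)" "snd G \<in> Pow (Pow {0..<n})"
      unfolding admissible_def hypergraph_def by (metis prod.collapse, auto)
    then show "x \<in> (\<lambda>E. hdens n ({0..<n}, E)) ` Pow (Pow {0..<n})" using G(2) by (metis image_eqI)
  qed
  then show ?thesis by (rule finite_subset) simp
qed

definition without_top_layer :: "nat \<Rightarrow> nat hypergraph" where
  "without_top_layer n = ({0..<n}, {E. E \<subseteq> {0..<n} \<and> card E \<in> R - {Max R}})"

lemma admissible_without_top_layer: "admissible n (without_top_layer n)"
proof -
  have "\<not> subhypergraph B (without_top_layer n)"
  proof
    assume "subhypergraph B (without_top_layer n)"
    then obtain f where f: "inj_on f (fst B)" "\<forall>E\<in>snd B. f ` E \<in> snd (without_top_layer n)"
      unfolding subhypergraph_def by blast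
    obtain F where F: "F \<in> snd L" "card F = Max R"
      using finite_R R_nonempty card_image_edges_flag by (metis Max_in imageE)
    define X where "X = (\<lambda>i. (i, 0::nat)) ` F"
    have X: "X \<in> transversals s F" unfolding X_def using zero_transversal s_pos edge_flag_subset[OF F(1)] by auto
    have "X \<subseteq> fst B" using X edge_flag_subset[OF F(1)] unfolding transversals_def fst_blowup vertices_flag by blast
    then have "card (f ` X) = card X" using f(1) by (metis card_image inj_on_subset)
    also have "card X = Max R" using card_transversal[OF finite_edge_flag[OF F(1)] X] F by auto
    finally have "card (f ` X) = Max R" .
    moreover have "f ` X \<in> snd (without_top_layer n)" using f(2) X F(1) unfolding snd_blowup by blast
    ultimately show False unfolding without_top_layer_def by auto
  qed
  then show ?thesis
    unfolding admissible_def hypergraph_def edge_sizes_def by (auto simp: without_top_layer_def)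
qed

lemma hdens_without_top_layer:
  assumes "n \<ge> m"
  shows "hdens n (without_top_layer n) = real (card R) - 1"
proof -
  define layer where "layer k = {E. E \<subseteq> {0..<n} \<and> card E = k}" for k
  have layers: "snd (without_top_layer n) = (\<Union>k\<in>R - {Max R}. layer k)"
    unfolding without_top_layer_def layer_def by auto
  have "hdens n (without_top_layer n) = (\<Sum>k\<in>R - {Max R}. \<Sum>E\<in>layer k. 1 / real (n choose card E))"
    unfolding hdens_def layers by (rule sum.UNION_disjoint) (auto simp: finite_R layer_def)
  also have "\<dots> = (\<Sum>k\<in>R - {Max R}. 1)"
  proof (rule sum.cong[OF refl])
    fix k assume k: "k \<in> R - {Max R}"
    have "k \<le> n" using k card_image_edges_flag card_edge_flag_le assms by fastforce
    then have "(n choose k) > 0" by simp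
    moreover have "card (layer k) = n choose k" unfolding layer_def using n_subsets[of "{0..<n}" k] by simp
    ultimately show "(\<Sum>E\<in>layer k. 1 / real (n choose card E)) = 1" by (simp add: layer_def)
  qed
  also have "\<dots> = real (card R) - 1"
    using finite_R R_nonempty by (simp add: card_Diff_singleton Suc_le_eq card_gt_0_iff of_nat_diff)
  finally show ?thesis .
qed

lemma pi_n_ge:
  assumes "n \<ge> m"
  shows "real (card R) - 1 \<le> pi_n n B"
proof -
  have "hdens n (without_top_layer n) \<in> {hdens n G | G. admissible n G}"
    using admissible_without_top_layer by blast
  then show ?thesis
    unfolding pi_n_eq_Max hdens_without_top_layer[OF assms, symmetric]
    by (rule Max_ge[OF finite_admissible_densities])
qed

definition size_order :: "nat list" where
  "size_order = sort_key s [1..<Suc m]"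

definition part_sizes :: "nat list" where
  "part_sizes = map s size_order"

definition position :: "nat \<Rightarrow> nat" where
  "position i = inv_into {..<m} ((!) size_order) i"

definition positions :: "nat set \<Rightarrow> nat set" where
  "positions F = {j. j < m \<and> size_order ! j \<in> F}"

text \<open>Labelled copies of \<open>L\<close> in \<open>G\<close>: the \<open>j\<close>-th entry is the image of the vertex
  \<open>size_order ! j\<close>, so that the parts of the blowup appear in order of increasing size.\<close>
definition copies :: "nat \<Rightarrow> nat hypergraph \<Rightarrow> nat list set" where
  "copies n G = {xs \<in> distinct_lists m {0..<n}. \<forall>F\<in>snd L. (!) xs ` positions F \<in> snd G}"

lemma length_size_order: "length size_order = m"
  unfolding size_order_def by simp

lemma set_size_order: "set size_order = {1..m}"
  unfolding size_order_def by auto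

lemma bij_betw_size_order: "bij_betw ((!) size_order) {..<m} {1..m}"
proof (rule bij_betw_nth)
  show "distinct size_order" "{..<m} = {..<length size_order}" "{1..m} = set size_order"
    by (auto simp: size_order_def set_size_order)
qed

lemma nth_size_order: "j < m \<Longrightarrow> size_order ! j \<in> {1..m}"
  using bij_betw_size_order by (auto simp: bij_betw_def)

lemma position:
  assumes "i \<in> {1..m}"
  shows "position i < m" "size_order ! position i = i"
proof -
  have i: "i \<in> (!) size_order ` {..<m}" using assms bij_betw_size_order by (simp add: bij_betw_def)
  show "position i < m" using inv_into_into[OF i] unfolding position_def by simp
  show "size_order ! position i = i" using f_inv_into_f[OF i] unfolding position_def .
qed

lemma position_nth: "j < m \<Longrightarrow> position (size_order ! j) = j"
  unfolding position_def using bij_betw_size_order bij_betw_inv_into_left by fastforce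

lemma length_part_sizes: "length part_sizes = m"
  unfolding part_sizes_def by (simp add: length_size_order)

lemma nth_part_sizes: "j < m \<Longrightarrow> part_sizes ! j = s (size_order ! j)"
  unfolding part_sizes_def by (simp add: length_size_order)

lemma sorted_part_sizes: "sorted part_sizes"
  unfolding part_sizes_def size_order_def by simp

lemma set_part_sizes: "set part_sizes = s ` {1..m}"
  unfolding part_sizes_def by (simp add: set_size_order)

lemma part_sizes_pos: "\<forall>x\<in>set part_sizes. x > 0"
  unfolding set_part_sizes using s_pos by blast

lemma positions_eq_image: "F \<subseteq> {1..m} \<Longrightarrow> positions F = position ` F"
  unfolding positions_def using position position_nth by force

lemma positions_edge:
  assumes "F \<in> snd L"
  shows "card (positions F) = card F" "positions F \<subseteq> {..<m}"
proof -
  have "inj_on position F"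
    using edge_flag_subset[OF assms] position(2) by (intro inj_onI) (metis subsetD)
  then show "card (positions F) = card F"
    unfolding positions_eq_image[OF edge_flag_subset[OF assms]] by (rule card_image)
  show "positions F \<subseteq> {..<m}" unfolding positions_def by auto
qed

definition box_embedding :: "nat set list \<Rightarrow> nat \<times> nat \<Rightarrow> nat" where
  "box_embedding As v = sorted_list_of_set (As ! position (fst v)) ! snd v"

context
  fixes As :: "nat set list" and n :: nat and G :: "nat hypergraph"
  assumes length_As: "length As = m"
    and sides: "\<forall>j<m. As ! j \<subseteq> {0..<n} \<and> card (As ! j) = part_sizes ! j"
    and box: "list_box As \<subseteq> copies n G"
begin

lemma card_side: "i \<in> {1..m} \<Longrightarrow> card (As ! position i) = s i"
  using sides position[of i] nth_part_sizes by simp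

lemma finite_side: "j < m \<Longrightarrow> finite (As ! j)"
  using sides finite_subset by blast

lemma side_nonempty: "j < m \<Longrightarrow> As ! j \<noteq> {}"
proof -
  assume "j < m"
  then have "card (As ! j) > 0" using sides part_sizes_pos length_part_sizes by (simp add: nth_mem)
  then show "As ! j \<noteq> {}" by auto
qed

lemma sides_disjoint: "j < m \<Longrightarrow> j' < m \<Longrightarrow> j \<noteq> j' \<Longrightarrow> As ! j \<inter> As ! j' = {}"
proof (rule list_box_sides_disjoint)
  show "list_box As \<subseteq> {xs. distinct xs}"
    using box unfolding copies_def distinct_lists_def by auto
  show "\<forall>A\<in>set As. A \<noteq> {}"
    using side_nonempty length_As by (auto simp: in_set_conv_nth)
qed (use length_As in simp_all)

lemma box_embedding_in:
  assumes "i \<in> {1..m}" "t < s i"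
  shows "box_embedding As (i, t) \<in> As ! position i"
proof -
  have "t < length (sorted_list_of_set (As ! position i))"
    using assms card_side by simp
  then have "sorted_list_of_set (As ! position i) ! t \<in> set (sorted_list_of_set (As ! position i))"
    by (rule nth_mem)
  then show ?thesis
    unfolding box_embedding_def using finite_side[OF position(1)[OF assms(1)]] by simp
qed

lemma inj_on_box_embedding: "inj_on (box_embedding As) (fst B)"
proof (rule inj_onI)
  fix x y assume "x \<in> fst B" "y \<in> fst B" and eq: "box_embedding As x = box_embedding As y"
  then obtain i t i' t' where x: "x = (i, t)" "i \<in> {1..m}" "t < s i"
    and y: "y = (i', t')" "i' \<in> {1..m}" "t' < s i'"
    unfolding fst_blowup vertices_flag blow_part_def by auto
  have "box_embedding As x \<in> As ! position i \<inter> As ! position i'"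
    using box_embedding_in[OF x(2,3)] box_embedding_in[OF y(2,3)] eq x(1) y(1) by simp
  then have "position i = position i'"
    using sides_disjoint[OF position(1)[OF x(2)] position(1)[OF y(2)]] by blast
  then have "i = i'" using position(2) x(2) y(2) by metis
  moreover have "t = t'"
    using eq finite_side[OF position(1)[OF x(2)]] card_side[OF x(2)] x y \<open>i = i'\<close>
    unfolding box_embedding_def by (simp add: nth_eq_iff_index_eq)
  ultimately show "x = y" using x(1) y(1) by simp
qed

lemma box_embedding_vertices: "box_embedding As ` fst B \<subseteq> {0..<n}"
proof
  fix z assume "z \<in> box_embedding As ` fst B"
  then obtain i t where "i \<in> {1..m}" "t < s i" "z = box_embedding As (i, t)"
    unfolding fst_blowup vertices_flag blow_part_def by auto
  then show "z \<in> {0..<n}" using box_embedding_in sides position(1) by blast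
qed

text \<open>Each edge of \<open>B\<close> is a transversal of an edge \<open>F\<close> of \<open>L\<close>; extending its image to a point of
  the box gives a copy of \<open>L\<close>, whose \<open>F\<close>-edge is that image.\<close>
lemma box_embedding_edge:
  assumes "E \<in> snd B"
  shows "box_embedding As ` E \<in> snd G"
proof -
  obtain F where F: "F \<in> snd L" "E \<in> transversals s F" using assms unfolding snd_blowup by blast
  obtain \<tau> where E: "E = (\<lambda>i. (i, \<tau> i)) ` F" and \<tau>: "\<forall>i\<in>F. \<tau> i < s i"
    using transversal_graph[OF F(2)] by blast
  define xs where "xs = map (\<lambda>j. if size_order ! j \<in> F
      then box_embedding As (size_order ! j, \<tau> (size_order ! j)) else (SOME z. z \<in> As ! j)) [0..<m]"
  have "xs \<in> list_box As"
    unfolding list_box_def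
  proof (intro CollectI conjI allI impI)
    show "length xs = length As" using length_As by (simp add: xs_def)
    fix j assume "j < length As"
    then have j: "j < m" using length_As by simp
    show "xs ! j \<in> As ! j"
    proof (cases "size_order ! j \<in> F")
      case True
      then show ?thesis
        using box_embedding_in[OF nth_size_order[OF j]] \<tau> position_nth[OF j] by (simp add: xs_def j)
    next
      case False
      then show ?thesis using side_nonempty[OF j] by (simp add: xs_def j some_in_eq)
    qed
  qed
  then have "(!) xs ` positions F \<in> snd G" using box F(1) unfolding copies_def by blast
  moreover have "(!) xs ` positions F = box_embedding As ` E"
    unfolding positions_eq_image[OF edge_flag_subset[OF F(1)]] E image_image
    using edge_flag_subset[OF F(1)] position by (intro image_cong) (auto simp: xs_def)
  ultimately show ?thesis by simp
qed

end

lemma subhypergraph_if_has_box: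
  assumes "has_box {0..<n} part_sizes (copies n G)" "fst G = {0..<n}"
  shows "subhypergraph B G"
proof -
  obtain As where As: "length As = m" "\<forall>j<m. As ! j \<subseteq> {0..<n} \<and> card (As ! j) = part_sizes ! j"
    "list_box As \<subseteq> copies n G"
    using assms(1) unfolding has_box_def length_part_sizes by blast
  show ?thesis
    unfolding subhypergraph_def
  proof (intro exI[of _ "box_embedding As"] conjI ballI)
    show "inj_on (box_embedding As) (fst B)" by (rule inj_on_box_embedding[OF As])
    show "box_embedding As ` fst B \<subseteq> fst G"
      using box_embedding_vertices[OF As] assms(2) by simp
    show "box_embedding As ` E \<in> snd G" if "E \<in> snd B" for E
      by (rule box_embedding_edge[OF As that])
  qed
qed

lemma hdens_eq_sum_layers:
  assumes "admissible n G"
  shows "hdens n G = (\<Sum>k\<in>R. real (card {E \<in> snd G. card E = k}) / real (n choose k))"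
proof -
  have "snd G \<subseteq> Pow {0..<n}" using assms unfolding admissible_def hypergraph_def by auto
  then have fin: "finite (snd G)" by (rule finite_subset) simp
  have layers: "snd G = (\<Union>k\<in>R. {E \<in> snd G. card E = k})"
    using assms unfolding admissible_def edge_sizes_def by auto
  have "hdens n G = (\<Sum>k\<in>R. \<Sum>E\<in>{E \<in> snd G. card E = k}. 1 / real (n choose card E))"
    unfolding hdens_def using fin
    by (subst layers) (rule sum.UNION_disjoint; auto simp: finite_R)
  then show ?thesis by simp
qed

lemma card_copies_of_edge:
  assumes "admissible n G" "F \<in> snd L" "n \<ge> m"
  shows "real (card {xs \<in> distinct_lists m {0..<n}. (!) xs ` positions F \<in> snd G})
       = real (card (distinct_lists m {0..<n})) * (real (card {E \<in> snd G. card E = card F}) / real (n choose card F))"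
proof -
  have "snd G \<subseteq> Pow {0..<n}" using assms(1) unfolding admissible_def hypergraph_def by auto
  have "{xs \<in> distinct_lists m {0..<n}. (!) xs ` positions F \<in> snd G}
      = {xs \<in> distinct_lists m {0..<n}. (!) xs ` positions F \<in> {E \<in> snd G. card E = card F}}"
    using nth_image_distinct_lists(1)[OF _ positions_edge(2)[OF assms(2)]] positions_edge(1)[OF assms(2)]
    by auto
  moreover have "real (card {xs \<in> distinct_lists m {0..<n}. (!) xs ` positions F \<in> {E \<in> snd G. card E = card F}})
      * real (n choose card F) = real (card (distinct_lists m {0..<n})) * real (card {E \<in> snd G. card E = card F})"
    using card_distinct_lists_image_in[of "{0..<n}" m "positions F" "{E \<in> snd G. card E = card F}"]
      assms(3) positions_edge[OF assms(2)] \<open>snd G \<subseteq> Pow {0..<n}\<close> by auto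
  moreover have "n choose card F > 0" using card_edge_flag_le[OF assms(2)] assms(3) by simp
  ultimately show ?thesis by (simp add: field_simps)
qed

lemma card_copies_ge:
  assumes "admissible n G" "n \<ge> m"
  shows "real (card (copies n G)) \<ge> real (card (distinct_lists m {0..<n})) * (hdens n G - (real (card R) - 1))"
proof -
  define I where "I = distinct_lists m {0..<n}"
  define good where "good F = {xs \<in> I. (!) xs ` positions F \<in> snd G}" for F
  define bad where "bad F = {xs \<in> I. (!) xs ` positions F \<notin> snd G}" for F
  define g where "g k = real (card {E \<in> snd G. card E = k}) / real (n choose k)" for k
  have fin: "finite I" unfolding I_def by (rule finite_distinct_lists) simp
  have "card I \<le> card (copies n G) + (\<Sum>F\<in>snd L. card (bad F))"
    using card_le_card_Ball_plus_sum_card_not[OF finite_edges_flag, of I "\<lambda>F xs. (!) xs ` positions F \<in> snd G"]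
    unfolding copies_def I_def bad_def .
  then have "real (card I) \<le> real (card (copies n G)) + (\<Sum>F\<in>snd L. real (card (bad F)))"
    by (metis of_nat_add of_nat_mono of_nat_sum)
  also have "(\<Sum>F\<in>snd L. real (card (bad F))) = (\<Sum>F\<in>snd L. real (card I) * (1 - g (card F)))"
  proof (rule sum.cong[OF refl])
    fix F assume F: "F \<in> snd L"
    have "bad F = I - good F" unfolding bad_def good_def by auto
    then have "real (card (bad F)) = real (card I) - real (card (good F))"
      using fin by (simp add: card_Diff_subset finite_subset card_mono of_nat_diff good_def)
    also have "real (card (good F)) = real (card I) * g (card F)"
      unfolding good_def I_def g_def by (rule card_copies_of_edge[OF assms(1) F assms(2)])
    finally show "real (card (bad F)) = real (card I) * (1 - g (card F))"
      by (simp add: algebra_simps)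
  qed
  also have "\<dots> = (\<Sum>k\<in>R. real (card I) * (1 - g k))"
    unfolding card_image_edges_flag[symmetric] by (simp add: sum.reindex[OF inj_on_card_edges_flag])
  also have "\<dots> = real (card I) * (real (card R) - (\<Sum>k\<in>R. g k))"
    by (simp add: sum_distrib_left[symmetric] sum_subtractf)
  also have "(\<Sum>k\<in>R. g k) = hdens n G"
    unfolding hdens_eq_sum_layers[OF assms(1)] g_def ..
  finally show ?thesis unfolding I_def by (simp add: algebra_simps)
qed

lemma exponent_eq: "real (Max (s ` {1..m})) / real (\<Prod>i\<in>{1..m}. s i) = 1 / real (prod_list (butlast part_sizes))"
proof -
  have "(\<Prod>i\<in>{1..m}. s i) = prod_list part_sizes"
    unfolding part_sizes_def set_size_order[symmetric]
    by (rule prod.distinct_set_conv_list) (simp add: size_order_def)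
  moreover have "part_sizes \<noteq> []" using length_part_sizes m_pos by auto
  ultimately show ?thesis
    using Max_div_prod_list_sorted[OF sorted_part_sizes _ part_sizes_pos] set_part_sizes by simp
qed

lemma hdens_le:
  defines "Q \<equiv> prod_list (butlast part_sizes)"
  shows "\<exists>K\<ge>0. \<forall>n\<ge>2 * m. \<forall>G. admissible n G \<longrightarrow>
           hdens n G \<le> real (card R) - 1 + K * real n powr (- (1 / real Q))"
proof -
  have ne: "part_sizes \<noteq> []" using length_part_sizes m_pos by auto
  have "0 \<notin> set (butlast part_sizes)" using part_sizes_pos by (auto dest: in_set_butlastD)
  then have Q: "Q \<ge> 1" unfolding Q_def using prod_list_zero_iff[of "butlast part_sizes"] by linarith
  obtain C where C: "C \<ge> 0" "\<forall>(V::nat set) T. finite V \<longrightarrow> T \<subseteq> {xs. length xs = m \<and> set xs \<subseteq> V} \<longrightarrow>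
      \<not> has_box V part_sizes T \<longrightarrow> real (card T) ^ Q \<le> C * real (card V) ^ (m * Q - 1)"
    using kovari_sos_turan[OF ne part_sizes_pos] unfolding Q_def length_part_sizes by blast
  show ?thesis
  proof (intro exI[of _ "(C * 2 ^ (m * Q)) powr (1 / real Q)"] conjI allI impI)
    fix n G assume n: "n \<ge> 2 * m" and G: "admissible n G"
    show "hdens n G \<le> real (card R) - 1 + (C * 2 ^ (m * Q)) powr (1 / real Q) * real n powr (- (1 / real Q))"
    proof (cases "hdens n G \<le> real (card R) - 1")
      case True
      then show ?thesis by (smt (verit) mult_nonneg_nonneg powr_ge_zero)
    next
      case False
      have "\<not> has_box {0..<n} part_sizes (copies n G)"
        using subhypergraph_if_has_box G unfolding admissible_def by blast
      moreover have "copies n G \<subseteq> {xs. length xs = m \<and> set xs \<subseteq> {0..<n}}"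
        unfolding copies_def distinct_lists_def by auto
      ultimately have "real (card (copies n G)) ^ Q \<le> C * real n ^ (m * Q - 1)"
        using C(2)[rule_format, of "{0..<n}" "copies n G"] by simp
      moreover have "n \<ge> m" "n \<ge> 1" using n m_pos by simp_all
      ultimately have "hdens n G - (real (card R) - 1)
          \<le> (C * 2 ^ (m * Q)) powr (1 / real Q) * real n powr (- (1 / real Q))"
        using False by (intro density_excess_bound[OF _ m_pos Q _ card_distinct_lists_ge[OF n]
              card_copies_ge[OF G]]) simp_all
      then show ?thesis by simp
    qed
  qed simp
qed

end

theorem mainTheorem15:
  fixes R :: "nat set" and L :: "nat hypergraph" and m :: nat and s :: "nat \<Rightarrow> nat"
  assumes "finite R" and "R \<noteq> {}" and "\<forall>k\<in>R. k > 0"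
    and "is_flag R L m"
    and "\<forall>i\<in>{1..m}. s i > 0"
  shows "(\<lambda>n. pi_n n (blowup L s) - (real (card R) - 1))
           \<in> O(\<lambda>n. real n powr (- (real (Max (s ` {1..m})) / real (\<Prod>i\<in>{1..m}. s i))))"
proof -
  interpret flag_blowup R L m s by unfold_locales fact+
  obtain K where K: "\<And>n G. n \<ge> 2 * m \<Longrightarrow> admissible n G \<Longrightarrow>
      hdens n G \<le> real (card R) - 1 + K * real n powr (- (1 / real (prod_list (butlast part_sizes))))"
    using hdens_le by blast
  have "\<bar>pi_n n B - (real (card R) - 1)\<bar>
      \<le> K * real n powr (- (real (Max (s ` {1..m})) / real (\<Prod>i\<in>{1..m}. s i)))"
    if n: "n \<ge> 2 * m" for n
  proof -
    have "{hdens n G | G. admissible n G} \<noteq> {}" using admissible_without_top_layer by blast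
    then have "pi_n n B \<le> real (card R) - 1 + K * real n powr (- (1 / real (prod_list (butlast part_sizes))))"
      unfolding pi_n_eq_Max using finite_admissible_densities K[OF n] by (subst Max_le_iff) auto
    then show ?thesis using pi_n_ge[of n] n unfolding exponent_eq by simp
  qed
  then show ?thesis
    by (intro bigoI[where c = K]) (auto simp: eventually_at_top_linorder)
qed

end
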